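(* Let $R$ be a commutative ring with unit, $\mathcal{P}$ a poset satisfying the descending chain condition, $i\in\mathcal{P}$, and $F\colon\mathcal{P}\to R\text{-mod}$ a functor which is pseudo-projective at $i$. Let $x=\oplus_{j<i}x_j\in\bigoplus_{j<i}F(j)$ satisfy $\sum_{j<i}F(j<i)(x_j)=0$. Then there is a sequence $\{x^n\}_{n\ge0}$, $x^n=\oplus_{j<i}x^n_j\in\bigoplus_{j<i}F(j)$, with $x^0=x$, such that for every $n\ge0$: $\sum_{j<i}F(j<i)(x^n_j)=0$; $x^{n+1}-x^n=\sum_{k<j,\ j\in\max\operatorname{supp}(x^n)}\big(y_{k,j}\oplus -F(k<j)(y_{k,j})\big)$ for some elements $y_{k,j}\in F(k)$ (with $y_{k,j}$ placed in the summand $F(k)$ and $-F(k<j)(y_{k,j})$ in the summand $F(j)$); $[x^{n+1}]=[x^n]$ in $\operatorname{colim}_{\mathcal{P}_{<i}}F$; and $\operatorname{supp}(x^{n+1})<\operatorname{supp}(x^n)$. In addition, there exists $N>0$ such that $x^n_j=0$ for all $j<i$ whenever $n\ge N$.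
   Context: DCC: no infinite strictly descending chains. $F(j<i)$ is the image of the arrow $j\to i$, $F(i<i)=1$. For $x=\oplus_j x_j$, $\operatorname{supp}(x)=\{j: x_j\ne0\}$; $[x]$ is the class of $x$ in the colimit. For subsets $I,J$ of $\mathcal{P}$, $J<I$ means every element of $J$ is strictly smaller than some element of $I$. $\max J$ is the set of maximal elements of $J$. $\operatorname{Im}_F(j)=\sum_{k<j}\operatorname{Im}F(k<j)$. $F$ is pseudo-projective at $i$ if for every finite $J\subset\mathcal{P}_{\le i}$ and every $\oplus_{j\in J}x_j\in\bigoplus_{j\in J}F(j)$ with $\sum_{j\in J}F(j<i)(x_j)=0$, one has $x_j\in\operatorname{Im}_F(j)$ for all $j\in\max J$. *)

theory Defs
  imports Main "HOL.Modules"
begin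

text \<open>All modules F j are
  modelled as submodules of one ambient R-module 'm (with scalar multiplication s);
  Fm j i is the image of the arrow j \<le> i, a linear map F j \<rightarrow> F i.\<close>

definition is_functor ::
  "('r::comm_ring_1 \<Rightarrow> 'm::ab_group_add \<Rightarrow> 'm) \<Rightarrow> ('p::order \<Rightarrow> 'm set) \<Rightarrow> ('p \<Rightarrow> 'p \<Rightarrow> 'm \<Rightarrow> 'm) \<Rightarrow> bool" where
  "is_functor s F Fm \<longleftrightarrow>
     module s \<and> (\<forall>j. module.subspace s (F j)) \<and>
     (\<forall>j i. j \<le> i \<longrightarrow>
        (\<forall>v\<in>F j. Fm j i v \<in> F i) \<and>
        (\<forall>v\<in>F j. \<forall>w\<in>F j. Fm j i (v + w) = Fm j i v + Fm j i w) \<and>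
        (\<forall>r. \<forall>v\<in>F j. Fm j i (s r v) = s r (Fm j i v))) \<and>
     (\<forall>i. \<forall>v\<in>F i. Fm i i v = v) \<and>
     (\<forall>k j i. k \<le> j \<longrightarrow> j \<le> i \<longrightarrow> (\<forall>v\<in>F k. Fm j i (Fm k j v) = Fm k i v))"

definition maxs :: "'p::order set \<Rightarrow> 'p set" where
  "maxs J = {j\<in>J. \<not> (\<exists>j'\<in>J. j < j')}"

definition set_less :: "'p::order set \<Rightarrow> 'p set \<Rightarrow> bool" where
  "set_less J I \<longleftrightarrow> (\<forall>j\<in>J. \<exists>i\<in>I. j < i)"

definition ImF :: "('p::order \<Rightarrow> 'm::ab_group_add set) \<Rightarrow> ('p \<Rightarrow> 'p \<Rightarrow> 'm \<Rightarrow> 'm) \<Rightarrow> 'p \<Rightarrow> 'm set" where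
  "ImF F Fm j = {(\<Sum>k\<in>K. Fm k j (y k)) | K y. finite K \<and> K \<subseteq> {k. k < j} \<and> (\<forall>k\<in>K. y k \<in> F k)}"

definition pseudo_projective ::
  "('p::order \<Rightarrow> 'm::ab_group_add set) \<Rightarrow> ('p \<Rightarrow> 'p \<Rightarrow> 'm \<Rightarrow> 'm) \<Rightarrow> 'p \<Rightarrow> bool" where
  "pseudo_projective F Fm i \<longleftrightarrow>
     (\<forall>J x. finite J \<longrightarrow> J \<subseteq> {j. j \<le> i} \<longrightarrow> (\<forall>j\<in>J. x j \<in> F j) \<longrightarrow>
        (\<Sum>j\<in>J. Fm j i (x j)) = 0 \<longrightarrow> (\<forall>j\<in>maxs J. x j \<in> ImF F Fm j))"

definition dsum :: "('p::order \<Rightarrow> 'm::zero set) \<Rightarrow> 'p \<Rightarrow> ('p \<Rightarrow> 'm) \<Rightarrow> bool" where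
  "dsum F i x \<longleftrightarrow> (\<forall>j. j < i \<longrightarrow> x j \<in> F j) \<and> (\<forall>j. \<not> j < i \<longrightarrow> x j = 0) \<and> finite {j. x j \<noteq> 0}"

definition supp :: "('p \<Rightarrow> 'm::zero) \<Rightarrow> 'p set" where
  "supp x = {j. x j \<noteq> 0}"

text \<open>The element y \<oplus> -F(k<j)(y) of the direct sum (y in summand k, -F(k<j) y in summand j).\<close>
definition gen :: "('p \<Rightarrow> 'p \<Rightarrow> 'm::ab_group_add \<Rightarrow> 'm) \<Rightarrow> 'p \<Rightarrow> 'p \<Rightarrow> 'm \<Rightarrow> 'p \<Rightarrow> 'm" where
  "gen Fm k j v = (\<lambda>l. (if l = k then v else 0) - (if l = j then Fm k j v else 0))"

text \<open>[x] = [x'] in colim_{P_{<i}} F, the colimit realised as the quotient of the direct sum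
  by the submodule generated by the elements gen k j y with k < j < i, y \<in> F k
  (this submodule consists exactly of the finite sums of such elements).\<close>
definition colim_eq ::
  "('p::order \<Rightarrow> 'm::ab_group_add set) \<Rightarrow> ('p \<Rightarrow> 'p \<Rightarrow> 'm \<Rightarrow> 'm) \<Rightarrow> 'p \<Rightarrow> ('p \<Rightarrow> 'm) \<Rightarrow> ('p \<Rightarrow> 'm) \<Rightarrow> bool" where
  "colim_eq F Fm i x x' \<longleftrightarrow>
     (\<exists>K y. finite K \<and> (\<forall>(k,j)\<in>K. k < j \<and> j < i \<and> y k j \<in> F k) \<and>
        (\<forall>l. x' l - x l = (\<Sum>(k,j)\<in>K. gen Fm k j (y k j) l)))"

end

(*
  If x lies in the kernel of the map from the direct sum of the F(j), j < i, to F(i), then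
  pseudo-projectivity writes every x_j with j maximal in supp x as a sum of images
  F(k<j)(y_kj).  Adding the colimit relations y_kj + -F(k<j)(y_kj) cancels these top
  entries and creates new entries only strictly below them; it changes neither the class
  in the colimit nor the image in F(i).  Iterating, each support is dominated by the
  previous one in the sense of set_less.  Under the DCC the multiset extension of < is
  well-founded, so the supports become empty after finitely many steps.
*)
theory Submission
  imports Defs "HOL-Library.Multiset"
begin

lemma sum_gen_same_target:
  assumes "finite K"
  shows "(\<Sum>k\<in>K. gen Fm k j (y k) l)
           = (if l \<in> K then y l else 0) - (if l = j then \<Sum>k\<in>K. Fm k j (y k) else 0)"
  using assms unfolding gen_def by (simp add: sum_subtractf)

lemma add_sum_gens_cancel:
  assumes "finite M" and "\<And>j. j \<in> M \<Longrightarrow> finite (Kj j) \<and> x j = (\<Sum>k\<in>Kj j. Fm k j (yj j k))"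
  shows "x l + (\<Sum>(k,j)\<in>prod.swap ` (SIGMA j:M. Kj j). gen Fm k j (yj j k) l)
           = (if l \<in> M then 0 else x l) + (\<Sum>j\<in>M. if l \<in> Kj j then yj j l else 0)"
proof -
  have "(\<Sum>(k,j)\<in>prod.swap ` (SIGMA j:M. Kj j). gen Fm k j (yj j k) l)
          = (\<Sum>j\<in>M. \<Sum>k\<in>Kj j. gen Fm k j (yj j k) l)"
    using assms by (simp add: sum.reindex sum.Sigma case_prod_unfold)
  also have "\<dots> = (\<Sum>j\<in>M. (if l \<in> Kj j then yj j l else 0) - (if l = j then x j else 0))"
    using assms(2) by (intro sum.cong) (simp_all add: sum_gen_same_target)
  also have "\<dots> = (\<Sum>j\<in>M. if l \<in> Kj j then yj j l else 0) - (if l \<in> M then x l else 0)"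
    using assms(1) by (simp add: sum_subtractf)
  finally show ?thesis
    by simp
qed

lemma set_less_chain_vanishes:
  fixes A :: "nat \<Rightarrow> 'a::order set"
  assumes wf: "wf {(a, b). (a::'a) < b}"
    and fin: "\<And>n. finite (A n)" and less: "\<And>n. set_less (A (Suc n)) (A n)"
  shows "\<exists>N. \<forall>n\<ge>N. A n = {}"
proof -
  have "\<exists>N. A N = {}"
  proof (rule ccontr)
    assume "\<nexists>N. A N = {}"
    then have "(mset_set (A (Suc n)), mset_set (A n)) \<in> mult {(a, b). a < b}" for n
      using one_step_implies_mult[of "mset_set (A n)" "mset_set (A (Suc n))" _ "{#}"] fin less
      unfolding set_less_def by (simp add: mset_set_empty_iff)
    then show False
      using wf_no_infinite_down_chainE[OF wf_mult[OF wf], of "\<lambda>n. mset_set (A n)"] by blast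
  qed
  then obtain N where "A N = {}" ..
  have "A n = {}" if "N \<le> n" for n
    using that
  proof (induction n rule: dec_induct)
    case (step n)
    then show ?case
      using less[of n] unfolding set_less_def by auto
  qed (fact \<open>A N = {}\<close>)
  then show ?thesis
    by blast
qed

lemma pseudo_projective_decompose_maxs:
  assumes "pseudo_projective F Fm i" and "dsum F i x" and "(\<Sum>j\<in>supp x. Fm j i (x j)) = 0"
  obtains Kj yj where "\<And>j. j \<in> maxs (supp x) \<Longrightarrow>
    finite (Kj j) \<and> (\<forall>k\<in>Kj j. k < j \<and> yj j k \<in> F k) \<and> x j = (\<Sum>k\<in>Kj j. Fm k j (yj j k))"
proof -
  have "finite (supp x)" "supp x \<subseteq> {j. j \<le> i}" "\<forall>j\<in>supp x. x j \<in> F j"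
    using assms(2) unfolding dsum_def supp_def by (auto intro: less_imp_le)
  then have "\<forall>j\<in>maxs (supp x). x j \<in> ImF F Fm j"
    using assms(1,3) unfolding pseudo_projective_def by simp
  then have "\<forall>j\<in>maxs (supp x). \<exists>K y. finite K \<and> (\<forall>k\<in>K. k < j \<and> y k \<in> F k) \<and>
      x j = (\<Sum>k\<in>K. Fm k j (y k))"
    unfolding ImF_def by fast
  then show thesis
    using that unfolding bchoice_iff by metis
qed

locale module_functor =
  fixes s :: "'r::comm_ring_1 \<Rightarrow> 'm::ab_group_add \<Rightarrow> 'm"
    and F :: "'p::order \<Rightarrow> 'm set" and Fm :: "'p \<Rightarrow> 'p \<Rightarrow> 'm \<Rightarrow> 'm"
  assumes functorial: "is_functor s F Fm"
begin

sublocale module s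
  using functorial by (simp add: is_functor_def)

lemma subspace_F: "subspace (F j)"
  using functorial by (simp add: is_functor_def)

lemma zero_in_F [simp]: "0 \<in> F j"
  by (rule subspace_0[OF subspace_F])

lemma add_in_F: "a \<in> F j \<Longrightarrow> b \<in> F j \<Longrightarrow> a + b \<in> F j"
  by (rule subspace_add[OF subspace_F])

lemma diff_in_F: "a \<in> F j \<Longrightarrow> b \<in> F j \<Longrightarrow> a - b \<in> F j"
  by (rule subspace_diff[OF subspace_F])

lemma sum_in_F: "(\<And>a. a \<in> A \<Longrightarrow> f a \<in> F j) \<Longrightarrow> sum f A \<in> F j"
  by (rule subspace_sum[OF subspace_F])

lemma Fm_in_F: "j \<le> i \<Longrightarrow> v \<in> F j \<Longrightarrow> Fm j i v \<in> F i"
  using functorial unfolding is_functor_def by blast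

lemma Fm_add: "j \<le> i \<Longrightarrow> v \<in> F j \<Longrightarrow> w \<in> F j \<Longrightarrow> Fm j i (v + w) = Fm j i v + Fm j i w"
  using functorial unfolding is_functor_def by blast

lemma Fm_comp: "k \<le> j \<Longrightarrow> j \<le> i \<Longrightarrow> v \<in> F k \<Longrightarrow> Fm j i (Fm k j v) = Fm k i v"
  using functorial unfolding is_functor_def by blast

lemma Fm_zero [simp]: "j \<le> i \<Longrightarrow> Fm j i 0 = 0"
  using Fm_add[of j i 0 0] by simp

lemma Fm_diff: "j \<le> i \<Longrightarrow> v \<in> F j \<Longrightarrow> w \<in> F j \<Longrightarrow> Fm j i (v - w) = Fm j i v - Fm j i w"
  using Fm_add[of j i "v - w" w] diff_in_F[of v j w] by (simp add: eq_diff_eq)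

lemma Fm_sum:
  assumes "j \<le> i" "\<And>a. a \<in> A \<Longrightarrow> f a \<in> F j"
  shows "Fm j i (sum f A) = (\<Sum>a\<in>A. Fm j i (f a))"
  using assms(2)
proof (induction A rule: infinite_finite_induct)
  case (insert a A)
  then show ?case using Fm_add[OF assms(1)] sum_in_F[of A f j] by simp
qed (use assms(1) in simp_all)

lemma dsum_iff: "dsum F i x \<longleftrightarrow> (\<forall>j. x j \<in> F j) \<and> finite (supp x) \<and> (\<forall>j\<in>supp x. j < i)"
  unfolding dsum_def supp_def by (metis (mono_tags, lifting) mem_Collect_eq zero_in_F)

lemma gen_in_F: "k \<le> j \<Longrightarrow> v \<in> F k \<Longrightarrow> gen Fm k j v l \<in> F l"
  unfolding gen_def by (intro diff_in_F) (auto intro: Fm_in_F)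

lemma sum_Fm_supp:
  assumes "finite S" "supp z \<subseteq> S" "\<forall>l\<in>S. l \<le> i"
  shows "(\<Sum>j\<in>supp z. Fm j i (z j)) = (\<Sum>j\<in>S. Fm j i (z j))"
  using assms by (intro sum.mono_neutral_left) (auto simp: supp_def)

lemma sum_Fm_gen:
  assumes "finite S" "k \<in> S" "j \<in> S" "\<forall>l\<in>S. l \<le> i" "k \<le> j" "v \<in> F k"
  shows "(\<Sum>l\<in>S. Fm l i (gen Fm k j v l)) = 0"
proof -
  have "Fm l i (gen Fm k j v l) = (if l = k then Fm k i v else 0) - (if l = j then Fm j i (Fm k j v) else 0)"
    if "l \<in> S" for l
    using that assms by (auto simp: gen_def Fm_diff Fm_in_F)
  then have "(\<Sum>l\<in>S. Fm l i (gen Fm k j v l)) = Fm k i v - Fm j i (Fm k j v)"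
    using assms(1-3) by (simp add: sum_subtractf)
  also have "\<dots> = 0"
    using assms by (simp add: Fm_comp)
  finally show ?thesis .
qed

lemma sum_Fm_colim_eq:
  assumes x: "dsum F i x" and x': "dsum F i x'" and "colim_eq F Fm i x x'"
  shows "(\<Sum>j\<in>supp x'. Fm j i (x' j)) = (\<Sum>j\<in>supp x. Fm j i (x j))"
proof -
  obtain K y where "finite K" and K: "\<forall>(k,j)\<in>K. k < j \<and> j < i \<and> y k j \<in> F k"
    and diff: "\<forall>l. x' l - x l = (\<Sum>(k,j)\<in>K. gen Fm k j (y k j) l)"
    using assms(3) unfolding colim_eq_def by blast
  define g where "g p = gen Fm (fst p) (snd p) (y (fst p) (snd p))" for p
  have x'_eq: "x' l = x l + (\<Sum>p\<in>K. g p l)" for l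
    using diff unfolding g_def case_prod_unfold by (metis diff_add_cancel add.commute)
  have Kp: "fst p < snd p \<and> snd p < i \<and> y (fst p) (snd p) \<in> F (fst p)" if "p \<in> K" for p
    using K that by (auto simp: case_prod_unfold)
  define S where "S = supp x \<union> supp x' \<union> fst ` K \<union> snd ` K"
  have "finite S"
    using x x' \<open>finite K\<close> unfolding S_def dsum_iff by simp
  moreover have "\<forall>l\<in>S. l < i"
    using x x' Kp unfolding S_def dsum_iff by (fastforce dest: order.strict_trans)
  ultimately have S: "finite S" "\<forall>l\<in>S. l \<le> i"
    by (auto intro: less_imp_le)
  have gF: "g p l \<in> F l" if "p \<in> K" for p l
    using Kp[OF that] unfolding g_def by (simp add: gen_in_F less_imp_le)
  have "(\<Sum>l\<in>S. Fm l i (x' l)) = (\<Sum>l\<in>S. Fm l i (x l)) + (\<Sum>p\<in>K. \<Sum>l\<in>S. Fm l i (g p l))"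
    using x S(2) gF unfolding x'_eq dsum_iff
    by (simp add: Fm_add Fm_sum sum_in_F sum.distrib) (rule sum.swap)
  moreover have "(\<Sum>l\<in>S. Fm l i (g p l)) = 0" if "p \<in> K" for p
    using Kp[OF that] S that unfolding g_def
    by (intro sum_Fm_gen) (auto simp: S_def intro: less_imp_le)
  moreover have "supp x \<subseteq> S" "supp x' \<subseteq> S"
    unfolding S_def by auto
  ultimately show ?thesis
    using sum_Fm_supp[OF S(1) _ S(2), of x] sum_Fm_supp[OF S(1) _ S(2), of x'] by simp
qed

end

definition ker_dsum ::
  "('p::order \<Rightarrow> 'm::ab_group_add set) \<Rightarrow> ('p \<Rightarrow> 'p \<Rightarrow> 'm \<Rightarrow> 'm) \<Rightarrow> 'p \<Rightarrow> ('p \<Rightarrow> 'm) \<Rightarrow> bool" where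
  "ker_dsum F Fm i x \<longleftrightarrow> dsum F i x \<and> (\<Sum>j\<in>supp x. Fm j i (x j)) = 0"

definition reduction_step ::
  "('p::order \<Rightarrow> 'm::ab_group_add set) \<Rightarrow> ('p \<Rightarrow> 'p \<Rightarrow> 'm \<Rightarrow> 'm) \<Rightarrow> 'p \<Rightarrow> ('p \<Rightarrow> 'm) \<Rightarrow> ('p \<Rightarrow> 'm) \<Rightarrow> bool" where
  "reduction_step F Fm i x x' \<longleftrightarrow>
     (\<exists>K y. finite K \<and>
        (\<forall>(k,j)\<in>K. j \<in> maxs (supp x) \<and> k < j \<and> y k j \<in> F k) \<and>
        (\<forall>l. x' l - x l = (\<Sum>(k,j)\<in>K. gen Fm k j (y k j) l))) \<and>
     colim_eq F Fm i x x' \<and> set_less (supp x') (supp x)"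

context module_functor
begin

lemma reduction_step_exists:
  assumes pp: "pseudo_projective F Fm i" and x: "ker_dsum F Fm i x"
  shows "\<exists>x'. ker_dsum F Fm i x' \<and> reduction_step F Fm i x x'"
proof -
  define J where "J = supp x"
  define M where "M = maxs J"
  obtain Kj yj where dec: "\<And>j. j \<in> M \<Longrightarrow>
    finite (Kj j) \<and> (\<forall>k\<in>Kj j. k < j \<and> yj j k \<in> F k) \<and> x j = (\<Sum>k\<in>Kj j. Fm k j (yj j k))"
    using pseudo_projective_decompose_maxs[OF pp] x unfolding ker_dsum_def M_def J_def by blast
  define K where "K = prod.swap ` (SIGMA j:M. Kj j)"
  define y where "y k j = yj j k" for k j
  define x' where "x' l = x l + (\<Sum>(k,j)\<in>K. gen Fm k j (y k j) l)" for l
  have J: "finite J" "\<forall>j\<in>J. j < i" "\<forall>j. x j \<in> F j"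
    using x unfolding ker_dsum_def dsum_iff J_def by auto
  have M: "M \<subseteq> J" "finite M"
    using J(1) unfolding M_def maxs_def by (auto intro: finite_subset)
  have "finite K"
    unfolding K_def using M(2) dec by auto
  have K: "\<forall>(k,j)\<in>K. j \<in> M \<and> k < j \<and> y k j \<in> F k"
    unfolding K_def y_def using dec by auto
  have x'_eq: "x' l = (if l \<in> M then 0 else x l) + (\<Sum>j\<in>M. if l \<in> Kj j then yj j l else 0)" for l
    unfolding x'_def K_def y_def using add_sum_gens_cancel[OF M(2)] dec by blast
  have "supp x' \<subseteq> (J - M) \<union> (\<Union>j\<in>M. Kj j)"
    using M(1) unfolding x'_eq supp_def J_def by (auto intro: sum.neutral)
  then have less: "set_less (supp x') J"
    using M(1) dec unfolding set_less_def M_def maxs_def by blast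
  have dsum': "dsum F i x'"
    unfolding dsum_iff
  proof (intro conjI allI ballI)
    show "x' l \<in> F l" for l
      unfolding x'_eq using J(3) dec by (auto intro!: add_in_F sum_in_F)
    show "finite (supp x')"
      using \<open>supp x' \<subseteq> _\<close> J(1) M(2) dec by (auto intro: finite_subset)
    show "l < i" if "l \<in> supp x'" for l
      using less that J(2) unfolding set_less_def by (blast dest: order.strict_trans)
  qed
  have diff: "\<forall>l. x' l - x l = (\<Sum>(k,j)\<in>K. gen Fm k j (y k j) l)"
    by (simp add: x'_def)
  have "\<forall>(k,j)\<in>K. k < j \<and> j < i \<and> y k j \<in> F k"
    using K M(1) J(2) by auto
  then have colim: "colim_eq F Fm i x x'"
    unfolding colim_eq_def using \<open>finite K\<close> diff by blast
  have "ker_dsum F Fm i x'"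
    using sum_Fm_colim_eq[OF _ dsum' colim] x dsum' unfolding ker_dsum_def by simp
  moreover have "reduction_step F Fm i x x'"
    unfolding reduction_step_def using \<open>finite K\<close> K diff colim less by (auto simp: M_def J_def)
  ultimately show ?thesis
    by blast
qed

end

theorem lemma6p1:
  fixes s :: "'r::comm_ring_1 \<Rightarrow> 'm::ab_group_add \<Rightarrow> 'm"
    and F :: "'p::order \<Rightarrow> 'm set" and Fm :: "'p \<Rightarrow> 'p \<Rightarrow> 'm \<Rightarrow> 'm"
    and i :: 'p and x :: "'p \<Rightarrow> 'm"
  assumes dcc: "wf {(a, b). (a::'p) < b}"
    and func: "is_functor s F Fm"
    and pp: "pseudo_projective F Fm i"
    and x: "dsum F i x"
    and x0: "(\<Sum>j\<in>supp x. Fm j i (x j)) = 0"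
  shows "\<exists>xs :: nat \<Rightarrow> 'p \<Rightarrow> 'm. xs 0 = x \<and>
    (\<forall>n. dsum F i (xs n) \<and>
         (\<Sum>j\<in>supp (xs n). Fm j i (xs n j)) = 0 \<and>
         (\<exists>K y. finite K \<and>
            (\<forall>(k,j)\<in>K. j \<in> maxs (supp (xs n)) \<and> k < j \<and> y k j \<in> F k) \<and>
            (\<forall>l. xs (Suc n) l - xs n l = (\<Sum>(k,j)\<in>K. gen Fm k j (y k j) l))) \<and>
         colim_eq F Fm i (xs n) (xs (Suc n)) \<and>
         set_less (supp (xs (Suc n))) (supp (xs n))) \<and>
    (\<exists>N>0. \<forall>n\<ge>N. \<forall>j. j < i \<longrightarrow> xs n j = 0)"
proof -
  interpret module_functor s F Fm
    by (rule module_functor.intro[OF func])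
  have "\<forall>z. ker_dsum F Fm i z \<longrightarrow> (\<exists>z'. ker_dsum F Fm i z' \<and> reduction_step F Fm i z z')"
    using reduction_step_exists[OF pp] by blast
  then obtain reduce where reduce: "\<And>z. ker_dsum F Fm i z \<Longrightarrow>
      ker_dsum F Fm i (reduce z) \<and> reduction_step F Fm i z (reduce z)"
    unfolding choice_iff' by blast
  define xs where "xs n = (reduce ^^ n) x" for n
  have ker: "ker_dsum F Fm i (xs n)" for n
    by (induction n) (use x x0 reduce in \<open>auto simp: xs_def ker_dsum_def\<close>)
  have step: "reduction_step F Fm i (xs n) (xs (Suc n))" for n
    using reduce[OF ker[of n]] by (simp add: xs_def)
  obtain N where "\<forall>n\<ge>N. supp (xs n) = {}"
    using set_less_chain_vanishes[OF dcc, of "\<lambda>n. supp (xs n)"] ker step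
    unfolding ker_dsum_def dsum_iff reduction_step_def by blast
  then have "\<forall>n\<ge>Suc N. \<forall>j. j < i \<longrightarrow> xs n j = 0"
    by (auto simp: supp_def)
  then show ?thesis
    using ker step unfolding ker_dsum_def reduction_step_def
    by (intro exI[of _ xs] conjI exI[of _ "Suc N"]) (auto simp: xs_def)
qed

end
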